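(* Suppose that $X(\mathbb{R})$ is a translation-invariant Banach function space. If $w(x):=e^{cx}$ for $x\in\mathbb{R}$ with a constant $c>0$, then the weighted Banach function space $X(\mathbb{R},w)$ does not satisfy the weak doubling property.
   Context: Banach function spaces on $\mathbb{R}^n$ (here $n=1$): let $\mathfrak{M}^+$ be the set of measurable functions with values in $[0,\infty]$. A Banach function norm $\rho:\mathfrak{M}^+\to[0,\infty]$ satisfies, for all $f,g,f_j\in\mathfrak{M}^+$, $a\ge0$, measurable $E$: (A1) $\rho(f)=0\iff f=0$ a.e., $\rho(af)=a\rho(f)$, $\rho(f+g)\le\rho(f)+\rho(g)$; (A2) $0\le g\le f$ a.e. implies $\rho(g)\le\rho(f)$; (A3) $0\le f_j\uparrow f$ a.e. implies $\rho(f_j)\uparrow\rho(f)$; (A4) $|E|<\infty$ implies $\rho(\chi_E)<\infty$; (A5) $|E|<\infty$ implies $\int_Ef\le C_E\rho(f)$ with $C_E$ independent of $f$. $X$ is the set of measurable complex $f$ with $\rho(|f|)<\infty$, $\|f\|_X=\rho(|f|)$. $X$ is translation-invariant if $\|u(\cdot-y)\|_X=\|u\|_X$ for all $y$ and $u\in X$. For a weight $w$, $X(\mathbb{R}^n,w)=\{f: fw\in X\}$ with $\|f\|_{X(\mathbb{R}^n,w)}=\|fw\|_X$. Weak doubling property: a Banach function space $Z(\mathbb{R}^n)$ has it if there is $\tau>1$ with $\liminf_{R\to\infty}\big(\inf_{y\in\mathbb{R}^n}\|\chi_{B(y,\tau R)}\|_{Z}/\|\chi_{B(y,R)}\|_{Z}\big)<\infty$,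 where $B(y,R)$ is the open ball of radius $R$ centered at $y$. *)

theory Defs
  imports "HOL-Analysis.Analysis"
begin

definition Mplus :: "(real \<Rightarrow> ennreal) set" where
  "Mplus = borel_measurable lebesgue"

definition banach_function_norm :: "((real \<Rightarrow> ennreal) \<Rightarrow> ennreal) \<Rightarrow> bool" where
  "banach_function_norm \<rho> \<longleftrightarrow>
     (\<forall>f\<in>Mplus. \<rho> f = 0 \<longleftrightarrow> (AE x in lebesgue. f x = 0)) \<and>
     (\<forall>f\<in>Mplus. \<forall>a::real. a \<ge> 0 \<longrightarrow> \<rho> (\<lambda>x. ennreal a * f x) = ennreal a * \<rho> f) \<and>
     (\<forall>f\<in>Mplus. \<forall>g\<in>Mplus. \<rho> (\<lambda>x. f x + g x) \<le> \<rho> f + \<rho> g) \<and>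
     (\<forall>f\<in>Mplus. \<forall>g\<in>Mplus. (AE x in lebesgue. g x \<le> f x) \<longrightarrow> \<rho> g \<le> \<rho> f) \<and>
     (\<forall>F::nat \<Rightarrow> real \<Rightarrow> ennreal. \<forall>f\<in>Mplus. (\<forall>j. F j \<in> Mplus) \<longrightarrow>
        (AE x in lebesgue. incseq (\<lambda>j. F j x) \<and> (\<lambda>j. F j x) \<longlonglongrightarrow> f x) \<longrightarrow>
        incseq (\<lambda>j. \<rho> (F j)) \<and> (\<lambda>j. \<rho> (F j)) \<longlonglongrightarrow> \<rho> f) \<and>
     (\<forall>E\<in>sets lebesgue. emeasure lebesgue E < \<infinity> \<longrightarrow> \<rho> (indicator E) < \<infinity>) \<and>
     (\<forall>E\<in>sets lebesgue. emeasure lebesgue E < \<infinity> \<longrightarrow>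
        (\<exists>C::real. \<forall>f\<in>Mplus. (\<integral>\<^sup>+x\<in>E. f x \<partial>lebesgue) \<le> ennreal C * \<rho> f))"

definition bfs :: "((real \<Rightarrow> ennreal) \<Rightarrow> ennreal) \<Rightarrow> (real \<Rightarrow> complex) set" where
  "bfs \<rho> = {f \<in> borel_measurable lebesgue. \<rho> (\<lambda>x. ennreal (cmod (f x))) < \<infinity>}"

definition bfs_norm :: "((real \<Rightarrow> ennreal) \<Rightarrow> ennreal) \<Rightarrow> (real \<Rightarrow> complex) \<Rightarrow> ennreal" where
  "bfs_norm \<rho> f = \<rho> (\<lambda>x. ennreal (cmod (f x)))"

definition translation_invariant :: "((real \<Rightarrow> ennreal) \<Rightarrow> ennreal) \<Rightarrow> bool" where
  "translation_invariant \<rho> \<longleftrightarrow>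
     (\<forall>u\<in>bfs \<rho>. \<forall>y::real. bfs_norm \<rho> (\<lambda>x. u (x - y)) = bfs_norm \<rho> u)"

definition weighted_norm :: "((real \<Rightarrow> ennreal) \<Rightarrow> ennreal) \<Rightarrow> (real \<Rightarrow> real) \<Rightarrow> (real \<Rightarrow> ennreal) \<Rightarrow> ennreal" where
  "weighted_norm \<rho> w f = \<rho> (\<lambda>x. f x * ennreal (w x))"

text \<open>Weak doubling property of a Banach function space Z with function norm \<rho>Z
  (note that the Z-norm of a characteristic function is \<rho>Z applied to it).\<close>
definition weak_doubling :: "((real \<Rightarrow> ennreal) \<Rightarrow> ennreal) \<Rightarrow> bool" where
  "weak_doubling \<rho>Z \<longleftrightarrow>
     (\<exists>\<tau>::real. \<tau> > 1 \<and>
        Liminf at_top (\<lambda>R::real. INF y::real.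
            \<rho>Z (indicator (ball y (\<tau> * R))) / \<rho>Z (indicator (ball y R))) < \<infinity>)"

end

theory Submission
  imports Defs
begin

text \<open>Translating the indicator of a ball by s multiplies its weighted norm by at least
  e^{cs}, because the weight e^{cx} is itself multiplied by e^{cs} under that translation,
  while the translate of B(y,R) lies inside B(y,R+s). Taking s = (\<tau>-1)R shows that the
  doubling ratio of the weighted space at radius R is at least e^{c(\<tau>-1)R}, uniformly in
  the centre, and this tends to infinity.\<close>

lemma banach_function_norm_zero_iff:
  "banach_function_norm \<rho> \<Longrightarrow> f \<in> Mplus \<Longrightarrow> \<rho> f = 0 \<longleftrightarrow> (AE x in lebesgue. f x = 0)"
  unfolding banach_function_norm_def by blast

lemma banach_function_norm_scale:
  "banach_function_norm \<rho> \<Longrightarrow> f \<in> Mplus \<Longrightarrow> a \<ge> 0 \<Longrightarrow>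
    \<rho> (\<lambda>x. ennreal a * f x) = ennreal a * \<rho> f"
  unfolding banach_function_norm_def by blast

lemma banach_function_norm_mono:
  "banach_function_norm \<rho> \<Longrightarrow> f \<in> Mplus \<Longrightarrow> g \<in> Mplus \<Longrightarrow> (\<And>x. g x \<le> f x) \<Longrightarrow> \<rho> g \<le> \<rho> f"
  unfolding banach_function_norm_def by (blast intro: AE_I2)

lemma banach_function_norm_indicator_finite:
  "banach_function_norm \<rho> \<Longrightarrow> E \<in> sets lebesgue \<Longrightarrow> emeasure lebesgue E < \<infinity> \<Longrightarrow>
    \<rho> (indicator E) < \<infinity>"
  unfolding banach_function_norm_def by blast

lemma borel_measurable_lebesgueI:
  "f \<in> borel_measurable borel \<Longrightarrow> f \<in> borel_measurable lebesgue"
  by (intro measurable_completion) (simp add: measurable_lborel2)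

lemma borel_measurable_translate:
  fixes g :: "real \<Rightarrow> 'b::topological_space"
  assumes "g \<in> borel_measurable borel"
  shows "(\<lambda>x. g (x - s)) \<in> borel_measurable borel"
  by (rule measurable_compose[OF _ assms])
    (intro borel_measurable_continuous_onI continuous_intros)

lemma translation_invariant_real:
  fixes g :: "real \<Rightarrow> real"
  assumes "translation_invariant \<rho>" and "g \<in> borel_measurable lebesgue"
    and "\<And>x. g x \<ge> 0" and "\<rho> (\<lambda>x. ennreal (g x)) < \<infinity>"
  shows "\<rho> (\<lambda>x. ennreal (g (x - s))) = \<rho> (\<lambda>x. ennreal (g x))"
proof -
  have abs_g: "\<bar>g x\<bar> = g x" for x
    using assms(3) by simp
  have g_bfs: "(\<lambda>x. complex_of_real (g x)) \<in> bfs \<rho>"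
    using assms(2,4) by (simp add: bfs_def abs_g)
  have "bfs_norm \<rho> (\<lambda>x. u (x - s)) = bfs_norm \<rho> u" if "u \<in> bfs \<rho>" for u
    using assms(1) that unfolding translation_invariant_def by blast
  from this[OF g_bfs] show ?thesis
    by (simp add: bfs_norm_def abs_g)
qed

lemma weighted_norm_indicator_finite:
  assumes "banach_function_norm \<rho>" and "w \<in> borel_measurable lebesgue"
    and "E \<in> sets lebesgue" and "emeasure lebesgue E < \<infinity>"
    and "\<And>x. x \<in> E \<Longrightarrow> w x \<le> M"
  shows "weighted_norm \<rho> w (indicator E) < \<infinity>"
proof -
  have "weighted_norm \<rho> w (indicator E) \<le> \<rho> (\<lambda>x. ennreal (max M 0) * indicator E x)"
    unfolding weighted_norm_def
  proof (rule banach_function_norm_mono[OF assms(1)])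
    show "(\<lambda>x. indicator E x * ennreal (w x)) \<in> Mplus"
      using assms(2,3) by (simp add: Mplus_def)
    show "(\<lambda>x. ennreal (max M 0) * indicator E x) \<in> Mplus"
      using assms(3) by (simp add: Mplus_def)
    show "indicator E x * ennreal (w x) \<le> ennreal (max M 0) * indicator E x" for x
      using assms(5) by (cases "x \<in> E") (simp_all add: ennreal_leI le_max_iff_disj)
  qed
  also have "\<dots> = ennreal (max M 0) * \<rho> (indicator E)"
    using assms(3) by (intro banach_function_norm_scale[OF assms(1)]) (simp_all add: Mplus_def)
  also have "\<dots> < \<infinity>"
    using banach_function_norm_indicator_finite[OF assms(1,3,4)]
    by (simp add: ennreal_mult_less_top)
  finally show ?thesis .
qed

lemma weighted_norm_indicator_pos:
  assumes "banach_function_norm \<rho>" and "w \<in> borel_measurable lebesgue"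
    and "E \<in> sets lebesgue" and "emeasure lebesgue E \<noteq> 0"
    and "\<And>x. w x > 0"
  shows "weighted_norm \<rho> w (indicator E) > 0"
proof -
  have support: "{x \<in> space lebesgue. indicator E x * ennreal (w x) \<noteq> 0} = E"
    using assms(5) by (auto simp: indicator_def ennreal_eq_0_iff) (metis not_le)
  have "\<not> (AE x in lebesgue. indicator E x * ennreal (w x) = 0)"
    using AE_iff_measurable[OF assms(3) support] assms(4) by simp
  then show ?thesis
    using banach_function_norm_zero_iff[OF assms(1), of "\<lambda>x. indicator E x * ennreal (w x)"]
      assms(2,3)
    by (simp add: weighted_norm_def Mplus_def zero_less_iff_neq_zero)
qed

lemma borel_measurable_lebesgue_exp_mult:
  "(\<lambda>x::real. exp (c * x)) \<in> borel_measurable lebesgue"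
  by (intro borel_measurable_lebesgueI borel_measurable_continuous_onI continuous_intros)

lemma exp_weighted_ball_finite:
  fixes c y R :: real
  assumes "banach_function_norm \<rho>"
  shows "weighted_norm \<rho> (\<lambda>x. exp (c * x)) (indicator (ball y R)) < \<infinity>"
proof (rule weighted_norm_indicator_finite[OF assms borel_measurable_lebesgue_exp_mult])
  show "emeasure lebesgue (ball y R) < \<infinity>"
    using emeasure_lborel_ball_finite by simp
  fix x assume "x \<in> ball y R"
  then have "\<bar>x\<bar> \<le> \<bar>y\<bar> + R"
    by (auto simp: dist_real_def)
  then have "c * x \<le> \<bar>c\<bar> * (\<bar>y\<bar> + R)"
    by (metis abs_ge_self abs_mult mult_left_mono abs_ge_zero order.trans)
  then show "exp (c * x) \<le> exp (\<bar>c\<bar> * (\<bar>y\<bar> + R))"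
    by simp
qed simp

lemma exp_weighted_ball_translate:
  fixes c s R y :: real
  assumes "banach_function_norm \<rho>" and "translation_invariant \<rho>" and "s \<ge> 0"
  shows "ennreal (exp (c * s)) * weighted_norm \<rho> (\<lambda>x. exp (c * x)) (indicator (ball y R))
    \<le> weighted_norm \<rho> (\<lambda>x. exp (c * x)) (indicator (ball y (R + s)))"
proof -
  define g where "g x = indicator (ball y R) x * exp (c * x)" for x
  have g_borel: "g \<in> borel_measurable borel"
    unfolding g_def
    by (intro borel_measurable_times borel_measurable_indicator
        borel_measurable_continuous_onI continuous_intros) simp
  have shift_Mplus: "(\<lambda>x. ennreal (exp (c * s)) * ennreal (g (x - s))) \<in> Mplus"
    using borel_measurable_translate[OF g_borel] by (simp add: Mplus_def borel_measurable_lebesgueI)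
  have weighted_g: "weighted_norm \<rho> (\<lambda>x. exp (c * x)) (indicator (ball y R))
      = \<rho> (\<lambda>x. ennreal (g x))"
    unfolding weighted_norm_def g_def by (rule arg_cong[where f = \<rho>]) (auto simp: indicator_def)
  then have "\<rho> (\<lambda>x. ennreal (g (x - s))) = \<rho> (\<lambda>x. ennreal (g x))"
    using exp_weighted_ball_finite[OF assms(1), of c y R]
    by (intro translation_invariant_real[OF assms(2) borel_measurable_lebesgueI[OF g_borel]])
      (simp_all add: g_def)
  with weighted_g have "ennreal (exp (c * s)) * weighted_norm \<rho> (\<lambda>x. exp (c * x)) (indicator (ball y R))
      = ennreal (exp (c * s)) * \<rho> (\<lambda>x. ennreal (g (x - s)))"
    by simp
  also have "\<dots> = \<rho> (\<lambda>x. ennreal (exp (c * s)) * ennreal (g (x - s)))"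
    using borel_measurable_translate[OF g_borel]
    by (intro banach_function_norm_scale[symmetric, OF assms(1)])
      (simp_all add: Mplus_def borel_measurable_lebesgueI)
  also have "\<dots> \<le> weighted_norm \<rho> (\<lambda>x. exp (c * x)) (indicator (ball y (R + s)))"
    unfolding weighted_norm_def
  proof (rule banach_function_norm_mono[OF assms(1) _ shift_Mplus])
    show "(\<lambda>x. indicator (ball y (R + s)) x * ennreal (exp (c * x))) \<in> Mplus"
      unfolding Mplus_def
      by (intro borel_measurable_times_ennreal borel_measurable_indicator
          measurable_compose[OF borel_measurable_lebesgue_exp_mult measurable_ennreal]) simp
    fix x
    have "exp (c * s) * exp (c * (x - s)) = exp (c * x)"
      by (simp flip: exp_add add: algebra_simps)
    moreover have "x - s \<in> ball y R \<Longrightarrow> x \<in> ball y (R + s)"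
      using assms(3) by (auto simp: dist_real_def)
    ultimately show "ennreal (exp (c * s)) * ennreal (g (x - s))
        \<le> indicator (ball y (R + s)) x * ennreal (exp (c * x))"
      by (auto simp: g_def indicator_def simp flip: ennreal_mult)
  qed
  finally show ?thesis .
qed

lemma exp_weighted_ball_ratio:
  fixes c R \<tau> y :: real
  assumes "banach_function_norm \<rho>" and "translation_invariant \<rho>"
    and "R > 0" and "\<tau> \<ge> 1"
  shows "ennreal (exp (c * ((\<tau> - 1) * R)))
    \<le> weighted_norm \<rho> (\<lambda>x. exp (c * x)) (indicator (ball y (\<tau> * R)))
      / weighted_norm \<rho> (\<lambda>x. exp (c * x)) (indicator (ball y R))"
proof -
  let ?N = "\<lambda>r. weighted_norm \<rho> (\<lambda>x. exp (c * x)) (indicator (ball y r))"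
  have "emeasure lebesgue (ball y R) = ennreal (2 * R)"
    using assms(3) by (simp add: ball_eq_greaterThanLessThan)
  then have "?N R > 0"
    using weighted_norm_indicator_pos[OF assms(1) borel_measurable_lebesgue_exp_mult] assms(3)
    by simp
  then have "ennreal (exp (c * ((\<tau> - 1) * R))) = ennreal (exp (c * ((\<tau> - 1) * R))) * ?N R / ?N R"
    using exp_weighted_ball_finite[OF assms(1), of c y R] by (simp add: ennreal_mult_divide_eq)
  also have "\<dots> \<le> ?N (R + (\<tau> - 1) * R) / ?N R"
    using assms(3,4) by (intro divide_right_mono_ennreal exp_weighted_ball_translate[OF assms(1,2)]) auto
  also have "R + (\<tau> - 1) * R = \<tau> * R"
    by (simp add: algebra_simps)
  finally show ?thesis .
qed

theorem theorem3p6: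
  fixes \<rho> :: "(real \<Rightarrow> ennreal) \<Rightarrow> ennreal" and c :: real
  assumes "banach_function_norm \<rho>"
    and "translation_invariant \<rho>"
    and "c > 0"
  shows "\<not> weak_doubling (weighted_norm \<rho> (\<lambda>x. exp (c * x)))"
proof
  let ?N = "weighted_norm \<rho> (\<lambda>x. exp (c * x))"
  assume "weak_doubling ?N"
  then obtain \<tau> :: real where "\<tau> > 1" and liminf_finite:
    "Liminf at_top (\<lambda>R. INF y. ?N (indicator (ball y (\<tau> * R))) / ?N (indicator (ball y R))) < \<infinity>"
    (is "Liminf at_top ?ratio < _")
    unfolding weak_doubling_def by blast
  have "\<forall>\<^sub>F R in at_top. ennreal (exp (c * ((\<tau> - 1) * R))) \<le> ?ratio R"
    using eventually_gt_at_top[of "0::real"]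
  proof eventually_elim
    case (elim R)
    show ?case
      using elim \<open>\<tau> > 1\<close> by (intro INF_greatest exp_weighted_ball_ratio[OF assms(1,2)]) simp_all
  qed
  then have "Liminf at_top (\<lambda>R. ennreal (exp (c * ((\<tau> - 1) * R)))) \<le> Liminf at_top ?ratio"
    by (rule Liminf_mono)
  moreover have "filterlim (\<lambda>R. exp (c * ((\<tau> - 1) * R))) at_top at_top"
    using \<open>c > 0\<close> \<open>\<tau> > 1\<close>
    by (intro filterlim_compose[OF exp_at_top] filterlim_tendsto_pos_mult_at_top[OF tendsto_const]
        filterlim_ident) simp_all
  then have "Liminf at_top (\<lambda>R. ennreal (exp (c * ((\<tau> - 1) * R)))) = \<infinity>"
    by (intro lim_imp_Liminf) (simp_all add: ennreal_tendsto_top_eq_at_top)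
  ultimately show False
    using liminf_finite by simp
qed

end
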